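(* For every prime $p$ the natural maps induce an isomorphism of rings $$\mathbb Z[1/p][q]^{\mathbb N}\;\cong\;\prod_{j=0}^\infty\mathbb Z[1/p][q]^{p^j\mathbb N_p}.$$
   Context: $\mathbb N=\{1,2,\dots\}$, $\mathbb N_p=\{n\in\mathbb N:(n,p)=1\}$, $p^j\mathbb N_p=\{p^jn:n\in\mathbb N_p\}$. For a commutative integral domain $R$ of characteristic zero and $S\subset\mathbb N$, $R[q]^S=\varprojlim_{f\in\Phi^*_S}R[q]/(f)$, where $\Phi^*_S$ is the multiplicative set generated by the cyclotomic polynomials $\Phi_n(q)$, $n\in S$, directed by divisibility; for $S'\subset S$ there is a natural map $R[q]^S\to R[q]^{S'}$. *)

theory Defs
  imports Complex_Main "HOL-Computational_Algebra.Polynomial"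
begin

text \<open>All polynomials live in complex[q]; R = Z[1/p] is the subring of rationals
  a / p^k, embedded in the complex numbers, and R[q] the polynomials with
  coefficients in R.\<close>

definition Zinvp :: "nat \<Rightarrow> complex set" where
  "Zinvp p = {z. \<exists>(a::int) (k::nat). z = of_int a / of_nat p ^ k}"

definition Rpoly :: "nat \<Rightarrow> complex poly set" where
  "Rpoly p = {f. \<forall>i. coeff f i \<in> Zinvp p}"

definition dvdR :: "nat \<Rightarrow> complex poly \<Rightarrow> complex poly \<Rightarrow> bool" where
  "dvdR p f g \<longleftrightarrow> (\<exists>h\<in>Rpoly p. g = f * h)"

definition cyclo :: "nat \<Rightarrow> complex poly" where
  "cyclo n = (\<Prod>k\<in>{k. k < n \<and> coprime k n}. [:- cis (2 * pi * real k / real n), 1:])"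

inductive_set cycloMult :: "nat set \<Rightarrow> complex poly set" for S where
  one: "1 \<in> cycloMult S"
| step: "n \<in> S \<Longrightarrow> f \<in> cycloMult S \<Longrightarrow> cyclo n * f \<in> cycloMult S"

text \<open>Elements of R[q]^S = lim_{f in cycloMult S} R[q]/(f), represented by
  compatible families of representatives g f in R[q].\<close>
definition compat :: "nat \<Rightarrow> nat set \<Rightarrow> (complex poly \<Rightarrow> complex poly) \<Rightarrow> bool" where
  "compat p S g \<longleftrightarrow>
     (\<forall>f\<in>cycloMult S. g f \<in> Rpoly p) \<and>
     (\<forall>f\<in>cycloMult S. \<forall>f'\<in>cycloMult S. dvdR p f f' \<longrightarrow> dvdR p f (g f' - g f))"

text \<open>Equality of the elements of R[q]^S represented by two families.\<close>
definition eqlim :: "nat \<Rightarrow> nat set \<Rightarrow> (complex poly \<Rightarrow> complex poly) \<Rightarrow> (complex poly \<Rightarrow> complex poly) \<Rightarrow> bool" where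
  "eqlim p S g h \<longleftrightarrow> (\<forall>f\<in>cycloMult S. dvdR p f (g f - h f))"

definition pjNp :: "nat \<Rightarrow> nat \<Rightarrow> nat set" where
  "pjNp p j = {p ^ j * n | n. n \<ge> 1 \<and> coprime n p}"

end

theory Submission
  imports Defs "HOL-Number_Theory.Totient"
begin

text \<open>
  Write R = Z[1/p] and, for S \<subseteq> N, R[q]^S for the inverse limit of the rings R[q]/(f),
  f ranging over products of cyclotomic polynomials with indices in S.  The proof that
  R[q]^N is the product of the rings R[q]^(p^j N_p) rests on one arithmetic fact:

    for i < j and a, b prime to p, the polynomials Phi_(p^i a) and Phi_(p^j b) generate
    the unit ideal of R[q].

  Indeed, with y = q^N for N = p^(j-1) a b, Phi_(p^i a) divides y - 1 while Phi_(p^j b)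
  divides 1 + y + ... + y^(p-1), which is congruent to p modulo y - 1; and p is a unit in R.
  Every f in the multiplicative set of all cyclotomic polynomials factors as a finite product
  f = f_0 f_1 ... f_(J-1) with f_j a product of Phi_n, n \<in> p^j N_p; by the fact above the
  factors are pairwise comaximal, so by the Chinese remainder theorem R[q]/(f) is the product
  of the R[q]/(f_j).
\<close>

subsection \<open>The ring Z[1/p] and polynomials over it\<close>

lemma Zinvp_int [simp]: "of_int a \<in> Zinvp p"
  unfolding Zinvp_def by (auto intro!: exI[of _ a] exI[of _ "0::nat"])

lemma Zinvp_0 [simp]: "0 \<in> Zinvp p"
  using Zinvp_int[of 0 p] by simp

lemma Zinvp_1 [simp]: "1 \<in> Zinvp p"
  using Zinvp_int[of 1 p] by simp

lemma Zinvp_inverse: "p > 0 \<Longrightarrow> 1 / of_nat p \<in> Zinvp p"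
  unfolding Zinvp_def by (auto intro!: exI[of _ 1] exI[of _ "1::nat"])

lemma Zinvp_add:
  assumes "p > 0" "x \<in> Zinvp p" "y \<in> Zinvp p"
  shows "x + y \<in> Zinvp p"
proof -
  obtain a k b l where x: "x = of_int a / of_nat p ^ k" and y: "y = of_int b / of_nat p ^ l"
    using assms unfolding Zinvp_def by blast
  have "x + y = of_int (a * int p ^ l + b * int p ^ k) / of_nat p ^ (k + l)"
    using assms(1) by (simp add: x y field_simps power_add)
  thus ?thesis unfolding Zinvp_def by blast
qed

lemma Zinvp_mult:
  assumes "x \<in> Zinvp p" "y \<in> Zinvp p"
  shows "x * y \<in> Zinvp p"
proof -
  obtain a k b l where x: "x = of_int a / of_nat p ^ k" and y: "y = of_int b / of_nat p ^ l"
    using assms unfolding Zinvp_def by blast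
  have "x * y = of_int (a * b) / of_nat p ^ (k + l)"
    by (simp add: x y power_add)
  thus ?thesis unfolding Zinvp_def by blast
qed

lemma Zinvp_uminus:
  assumes "x \<in> Zinvp p"
  shows "- x \<in> Zinvp p"
proof -
  obtain a k where "x = of_int a / of_nat p ^ k"
    using assms unfolding Zinvp_def by blast
  hence "- x = of_int (- a) / of_nat p ^ k" by simp
  thus ?thesis unfolding Zinvp_def by blast
qed

lemma Zinvp_diff: "p > 0 \<Longrightarrow> x \<in> Zinvp p \<Longrightarrow> y \<in> Zinvp p \<Longrightarrow> x - y \<in> Zinvp p"
  using Zinvp_add[of p x "-y"] Zinvp_uminus[of y p] by simp

lemma Zinvp_sum: "p > 0 \<Longrightarrow> (\<And>i. i \<in> A \<Longrightarrow> f i \<in> Zinvp p) \<Longrightarrow> sum f A \<in> Zinvp p"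
  by (induction A rule: infinite_finite_induct) (auto intro: Zinvp_add)

lemma Rpoly_0 [simp]: "0 \<in> Rpoly p"
  by (simp add: Rpoly_def)

lemma Rpoly_1 [simp]: "1 \<in> Rpoly p"
  by (simp add: Rpoly_def coeff_1)

lemma Rpoly_monom: "c \<in> Zinvp p \<Longrightarrow> monom c n \<in> Rpoly p"
  by (simp add: Rpoly_def coeff_monom)

lemma Rpoly_add: "p > 0 \<Longrightarrow> f \<in> Rpoly p \<Longrightarrow> g \<in> Rpoly p \<Longrightarrow> f + g \<in> Rpoly p"
  by (simp add: Rpoly_def Zinvp_add)

lemma Rpoly_diff: "p > 0 \<Longrightarrow> f \<in> Rpoly p \<Longrightarrow> g \<in> Rpoly p \<Longrightarrow> f - g \<in> Rpoly p"
  by (simp add: Rpoly_def Zinvp_diff)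

lemma Rpoly_mult: "p > 0 \<Longrightarrow> f \<in> Rpoly p \<Longrightarrow> g \<in> Rpoly p \<Longrightarrow> f * g \<in> Rpoly p"
  by (simp add: Rpoly_def coeff_mult Zinvp_sum Zinvp_mult)

lemma Rpoly_smult: "c \<in> Zinvp p \<Longrightarrow> f \<in> Rpoly p \<Longrightarrow> smult c f \<in> Rpoly p"
  by (simp add: Rpoly_def Zinvp_mult)

lemma Rpoly_sum: "p > 0 \<Longrightarrow> (\<And>i. i \<in> A \<Longrightarrow> f i \<in> Rpoly p) \<Longrightarrow> sum f A \<in> Rpoly p"
  by (induction A rule: infinite_finite_induct) (auto intro: Rpoly_add)

lemma Rpoly_prod: "p > 0 \<Longrightarrow> (\<And>i. i \<in> A \<Longrightarrow> f i \<in> Rpoly p) \<Longrightarrow> prod f A \<in> Rpoly p"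
  by (induction A rule: infinite_finite_induct) (auto intro: Rpoly_mult)

lemma Rpoly_power: "p > 0 \<Longrightarrow> f \<in> Rpoly p \<Longrightarrow> f ^ n \<in> Rpoly p"
  by (induction n) (auto intro: Rpoly_mult)

text \<open>
  Induction on the degree of h, peeling off
  its leading term (whose coefficient is the leading coefficient of f h).
\<close>
lemma Rpoly_div_monic:
  assumes p: "p > 0" and f: "f \<in> Rpoly p" and monic: "lead_coeff f = 1"
  shows "f * h \<in> Rpoly p \<Longrightarrow> h \<in> Rpoly p"
proof (induction "degree h" arbitrary: h rule: less_induct)
  case less
  show ?case
  proof (cases "h = 0")
    case True thus ?thesis by simp
  next
    case False
    define c where "c = lead_coeff h"
    define h' where "h' = h - monom c (degree h)"
    have "lead_coeff (f * h) = c" using monic by (simp add: c_def lead_coeff_mult)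
    moreover have "coeff (f * h) (degree (f * h)) \<in> Zinvp p"
      using less.prems unfolding Rpoly_def by blast
    ultimately have top_R: "monom c (degree h) \<in> Rpoly p" by (simp add: Rpoly_monom)
    have "f * h' = f * h - f * monom c (degree h)" by (simp add: h'_def algebra_simps)
    hence fh'_R: "f * h' \<in> Rpoly p"
      using less.prems top_R f p by (simp add: Rpoly_diff Rpoly_mult)
    have "h' \<in> Rpoly p"
    proof (cases "h' = 0")
      case True thus ?thesis by simp
    next
      case False
      have "degree h' < degree h"
      proof (cases "degree h = 0")
        case True
        hence "h' = 0" unfolding h'_def c_def by (metis degree_0_id diff_self monom_0)
        with False show ?thesis by simp
      next
        case False
        have "degree h' \<le> degree h" unfolding h'_def
          by (metis degree_diff_le degree_monom_le le_refl)
        moreover have "coeff h' (degree h) = 0" by (simp add: h'_def c_def coeff_monom)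
        ultimately show ?thesis using \<open>h' \<noteq> 0\<close>
          by (metis le_neq_implies_less leading_coeff_0_iff)
      qed
      thus ?thesis using less.hyps fh'_R by blast
    qed
    hence "h' + monom c (degree h) \<in> Rpoly p" using top_R p by (intro Rpoly_add)
    thus ?thesis by (simp add: h'_def)
  qed
qed


subsection \<open>Cyclotomic polynomials\<close>

definition root_of_unity :: "nat \<Rightarrow> nat \<Rightarrow> complex" where
  "root_of_unity n k = cis (2 * pi * real k / real n)"

definition primitive_roots :: "nat \<Rightarrow> complex set" where
  "primitive_roots n = root_of_unity n ` {k. k < n \<and> coprime k n}"

lemma cis_eq_1_iff_int:
  assumes "cis x = 1"
  shows "\<exists>m::int. x = of_int m * 2 * pi"
proof -
  have "cos x = 1" using assms by (metis cis.sel(1) one_complex.sel(1))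
  thus ?thesis using cos_one_2pi_int by auto
qed

lemma root_of_unity_eq:
  assumes "k < n" "k' < n'" "root_of_unity n k = root_of_unity n' k'"
  shows "real k / real n = real k' / real n'"
proof -
  define a b where "a = real k / real n" and "b = real k' / real n'"
  have ab: "0 \<le> a" "a < 1" "0 \<le> b" "b < 1" using assms(1,2) by (auto simp: a_def b_def)
  have "cis (2 * pi * a - 2 * pi * b) = 1"
    using assms(3) by (simp add: root_of_unity_def a_def b_def flip: cis_divide)
  then obtain m :: int where "2 * pi * a - 2 * pi * b = of_int m * 2 * pi"
    using cis_eq_1_iff_int by blast
  hence "2 * pi * (a - b - of_int m) = 0" by (simp add: algebra_simps)
  hence "a - b = of_int m" by simp
  moreover have "\<bar>a - b\<bar> < 1" using ab by auto
  ultimately have "m = 0" by auto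
  thus ?thesis using \<open>a - b = of_int m\<close> by (simp add: a_def b_def)
qed

lemma inj_root_of_unity: "inj_on (root_of_unity n) {k. k < n \<and> coprime k n}"
proof (rule inj_onI)
  fix k k' assume k: "k \<in> {k. k < n \<and> coprime k n}" and k': "k' \<in> {k. k < n \<and> coprime k n}"
    and eq: "root_of_unity n k = root_of_unity n k'"
  have "real k / real n = real k' / real n" using k k' eq by (intro root_of_unity_eq) auto
  moreover have "n > 0" using k by auto
  ultimately show "k = k'" by (simp add: field_simps)
qed

lemma cyclo_primitive_roots: "cyclo n = (\<Prod>z\<in>primitive_roots n. [:-z, 1:])"
  unfolding cyclo_def primitive_roots_def
  by (subst prod.reindex[OF inj_root_of_unity]) (simp add: root_of_unity_def)

lemma card_primitive_roots: "card (primitive_roots n) = totient n"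
proof -
  have "card (primitive_roots n) = card {k. k < n \<and> coprime k n}"
    unfolding primitive_roots_def by (rule card_image[OF inj_root_of_unity])
  also have "\<dots> = totient n"
  proof (cases "n \<le> 1")
    case True
    then consider "n = 0" | "n = 1" by linarith
    thus ?thesis by cases auto
  next
    case False
    hence "{k. k < n \<and> coprime k n} = totatives n"
      unfolding totatives_def by (auto simp: le_less intro: Nat.gr0I)
    thus ?thesis by (simp add: totient_def)
  qed
  finally show ?thesis .
qed

text \<open>A root of unity has exactly one order: the sets of primitive roots are disjoint.\<close>
lemma primitive_roots_disjoint:
  assumes "z \<in> primitive_roots d" "z \<in> primitive_roots d'"
  shows "d = d'"
proof -
  obtain k k' where k: "k < d" "coprime k d" "z = root_of_unity d k"
    and k': "k' < d'" "coprime k' d'" "z = root_of_unity d' k'"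
    using assms unfolding primitive_roots_def by auto
  have "real k / real d = real k' / real d'" using root_of_unity_eq k k' by metis
  hence "real (k * d') = real (k' * d)" using k k' by (simp add: field_simps)
  hence e: "k * d' = k' * d" by linarith
  have "d dvd d'" using e k(2) by (metis coprime_commute coprime_dvd_mult_right_iff dvd_triv_right)
  moreover have "d' dvd d" using e k'(2) by (metis coprime_commute coprime_dvd_mult_right_iff dvd_triv_right)
  ultimately show ?thesis by (simp add: dvd_antisym)
qed

lemma root_of_unity_power: "root_of_unity n k ^ m = cis (2 * pi * (real k * real m / real n))"
  by (simp add: root_of_unity_def DeMoivre algebra_simps)

lemma primitive_root_power_1:
  assumes "z \<in> primitive_roots d" "d dvd n"
  shows "z ^ n = 1"
proof -
  obtain k where k: "k < d" "z = root_of_unity d k" using assms unfolding primitive_roots_def by auto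
  obtain e where n: "n = d * e" using assms by blast
  have "d > 0" using k by auto
  hence "real k * real n / real d = real (k * e)" by (simp add: n field_simps)
  thus ?thesis using k root_of_unity_power[of d k n] by (simp add: cis_multiple_2pi)
qed

lemma linear_factors_dvd:
  fixes F :: "complex poly"
  assumes "finite A" "\<And>z. z \<in> A \<Longrightarrow> poly F z = 0"
  shows "(\<Prod>z\<in>A. [:-z, 1:]) dvd F"
  using assms
proof (induction A arbitrary: F rule: finite_induct)
  case empty thus ?case by simp
next
  case (insert a A)
  obtain G where G: "F = [:-a, 1:] * G" using insert.prems poly_eq_0_iff_dvd by blast
  have "poly G z = 0" if "z \<in> A" for z
    using that insert G by auto
  hence "(\<Prod>z\<in>A. [:-z, 1:]) dvd G" using insert.IH by blast
  moreover have "(\<Prod>z\<in>insert a A. [:-z, 1:]) = [:-a, 1:] * (\<Prod>z\<in>A. [:-z, 1:])"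
    using insert.hyps by (rule prod.insert)
  ultimately show ?case unfolding G by (metis mult_dvd_mono dvd_refl)
qed

lemma cyclo_dvd_if_roots:
  assumes "\<And>z. z \<in> primitive_roots n \<Longrightarrow> poly F z = 0"
  shows "cyclo n dvd F"
  unfolding cyclo_primitive_roots by (rule linear_factors_dvd) (use assms in \<open>auto simp: primitive_roots_def\<close>)

lemma monic_linear_factors: "lead_coeff (\<Prod>z\<in>A. [:-z, 1:] :: complex poly) = 1"
  by (simp add: lead_coeff_prod)

lemma degree_linear_factors: "finite A \<Longrightarrow> degree (\<Prod>z\<in>A. [:-z, 1:] :: complex poly) = card A"
  by (subst degree_prod_sum_eq) auto

lemma monic_cyclo: "lead_coeff (cyclo n) = 1"
  by (simp add: cyclo_primitive_roots monic_linear_factors)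

lemma monic_dvd_same_degree:
  fixes f g :: "complex poly"
  assumes "f dvd g" "lead_coeff f = 1" "lead_coeff g = 1" "degree f = degree g"
  shows "f = g"
proof -
  obtain h where h: "g = f * h" using assms by blast
  have "h \<noteq> 0" "f \<noteq> 0" using h assms(2,3) by auto
  hence "degree h = 0" using h assms(4) by (simp add: degree_mult_eq)
  moreover have "lead_coeff h = 1" using h assms(2,3) by (simp add: lead_coeff_mult)
  ultimately have "h = 1" by (metis degree_0_id one_pCons)
  thus ?thesis using h by simp
qed

text \<open>The product formula q^n - 1 = prod_(d | n) Phi_d: both sides are monic of degree n
  (by sum_(d|n) phi(d) = n) and the left side vanishes at every root of the right side.\<close>
lemma cyclo_prod_divisors:
  assumes "n > 0"
  shows "(\<Prod>d\<in>{d. d dvd n}. cyclo d) = monom 1 n - (1 :: complex poly)"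
proof -
  let ?Z = "\<Union>d\<in>{d. d dvd n}. primitive_roots d"
  have fin: "finite {d. d dvd n}" using assms by simp
  have fin_roots: "finite (primitive_roots d)" for d by (simp add: primitive_roots_def)
  have "(\<Prod>d\<in>{d. d dvd n}. cyclo d) = (\<Prod>z\<in>?Z. [:-z, 1:])"
    unfolding cyclo_primitive_roots
    by (rule prod.UNION_disjoint[symmetric]) (use fin fin_roots primitive_roots_disjoint in auto)
  also have "\<dots> = monom 1 n - 1"
  proof (rule monic_dvd_same_degree)
    show "(\<Prod>z\<in>?Z. [:-z, 1:]) dvd monom 1 n - 1"
      by (rule linear_factors_dvd)
         (use fin fin_roots primitive_root_power_1 in \<open>auto simp: poly_monom\<close>)
    show "lead_coeff (\<Prod>z\<in>?Z. [:-z, 1:]) = 1" by (rule monic_linear_factors)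
    have deg: "degree (monom 1 n - 1 :: complex poly) = n"
      using assms degree_add_eq_left[of "-1" "monom 1 n :: complex poly"] by (simp add: degree_monom_eq)
    show "lead_coeff (monom 1 n - 1 :: complex poly) = 1"
      using assms by (simp add: deg coeff_monom)
    have "card ?Z = (\<Sum>d\<in>{d. d dvd n}. card (primitive_roots d))"
      by (rule card_UN_disjoint) (use fin fin_roots primitive_roots_disjoint in auto)
    also have "\<dots> = n" by (simp add: card_primitive_roots totient_divisor_sum)
    finally show "degree (\<Prod>z\<in>?Z. [:-z, 1:]) = degree (monom 1 n - 1 :: complex poly)"
      using fin fin_roots by (simp add: degree_linear_factors deg)
  qed
  finally show ?thesis .
qed

text \<open>Cyclotomic polynomials have coefficients in R (indeed in Z): by strong induction,
  Phi_n is the quotient of q^n - 1 by the monic product of the Phi_d, d a proper divisor.\<close>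
lemma cyclo_Rpoly:
  assumes p: "p > 0"
  shows "cyclo n \<in> Rpoly p"
proof (induction n rule: less_induct)
  case (less n)
  show ?case
  proof (cases "n = 0")
    case True
    thus ?thesis by (simp add: cyclo_def)
  next
    case False
    define D where "D = {d. d dvd n} - {n}"
    have "monom 1 n - 1 = (\<Prod>d\<in>{d. d dvd n}. cyclo d)"
      using False by (simp add: cyclo_prod_divisors)
    also have "\<dots> = (\<Prod>d\<in>D. cyclo d) * cyclo n"
      unfolding D_def using False by (subst prod.remove[of _ n]) (auto simp: mult.commute)
    finally have "(\<Prod>d\<in>D. cyclo d) * cyclo n = monom 1 n - 1" ..
    moreover have "monom 1 n - 1 \<in> Rpoly p"
      using p by (intro Rpoly_diff Rpoly_monom) auto
    ultimately have quotient: "(\<Prod>d\<in>D. cyclo d) * cyclo n \<in> Rpoly p" by (simp only:)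
    have "(\<Prod>d\<in>D. cyclo d) \<in> Rpoly p"
    proof (rule Rpoly_prod[OF p])
      fix d assume "d \<in> D"
      hence "d < n" using False unfolding D_def by (auto simp: le_less dest: dvd_imp_le)
      thus "cyclo d \<in> Rpoly p" by (rule less.IH)
    qed
    moreover have "lead_coeff (\<Prod>d\<in>D. cyclo d) = 1"
      by (simp add: lead_coeff_prod monic_cyclo)
    ultimately show ?thesis
      using Rpoly_div_monic[OF p] quotient by blast
  qed
qed

lemma Rpoly_cyclo_quotient:
  assumes "p > 0" "F \<in> Rpoly p" "F = cyclo n * u"
  shows "u \<in> Rpoly p"
  by (rule Rpoly_div_monic[OF assms(1) cyclo_Rpoly[OF assms(1)] monic_cyclo]) (use assms in simp)

lemma cycloMult_Rpoly:
  assumes "f \<in> cycloMult S" "p > 0"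
  shows "f \<in> Rpoly p"
  using assms by (induction rule: cycloMult.induct) (auto intro: Rpoly_mult cyclo_Rpoly)

lemma cycloMult_mono:
  assumes "f \<in> cycloMult S" "S \<subseteq> T"
  shows "f \<in> cycloMult T"
  using assms by (induction rule: cycloMult.induct) (auto intro: cycloMult.intros)

subsection \<open>Divisibility, comaximality and the Chinese remainder theorem in R[q]\<close>

lemma dvdR_refl: "dvdR p f f"
  unfolding dvdR_def by (rule bexI[of _ 1]) auto

lemma dvdR_trans: "p > 0 \<Longrightarrow> dvdR p f g \<Longrightarrow> dvdR p g k \<Longrightarrow> dvdR p f k"
  unfolding dvdR_def by (metis Rpoly_mult mult.assoc)

lemma dvdR_add: "p > 0 \<Longrightarrow> dvdR p f a \<Longrightarrow> dvdR p f b \<Longrightarrow> dvdR p f (a + b)"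
  unfolding dvdR_def by (metis Rpoly_add distrib_left)

lemma dvdR_diff: "p > 0 \<Longrightarrow> dvdR p f a \<Longrightarrow> dvdR p f b \<Longrightarrow> dvdR p f (a - b)"
  unfolding dvdR_def by (metis Rpoly_diff right_diff_distrib)

lemma dvdR_one: "x \<in> Rpoly p \<Longrightarrow> dvdR p 1 x"
  unfolding dvdR_def by auto

lemma dvdR_mult_right: "r \<in> Rpoly p \<Longrightarrow> dvdR p f (f * r)"
  unfolding dvdR_def by blast

definition comaximal :: "nat \<Rightarrow> complex poly \<Rightarrow> complex poly \<Rightarrow> bool" where
  "comaximal p f g \<longleftrightarrow> (\<exists>s\<in>Rpoly p. \<exists>t\<in>Rpoly p. s * f + t * g = 1)"

lemma comaximal_sym: "comaximal p f g \<Longrightarrow> comaximal p g f"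
  unfolding comaximal_def by (metis add.commute)

lemma comaximal_one: "comaximal p f 1"
  unfolding comaximal_def by (rule bexI[of _ 0], rule bexI[of _ 1]) auto

lemma comaximal_mult:
  assumes p: "p > 0" and f: "f \<in> Rpoly p" and "comaximal p f g1" "comaximal p f g2"
  shows "comaximal p f (g1 * g2)"
proof -
  obtain s1 t1 s2 t2 where R: "s1 \<in> Rpoly p" "t1 \<in> Rpoly p" "s2 \<in> Rpoly p" "t2 \<in> Rpoly p"
    and e1: "t1 * g1 = 1 - s1 * f" and e2: "t2 * g2 = 1 - s2 * f"
    using assms unfolding comaximal_def by (metis add_diff_cancel_left')
  have "(t1 * t2) * (g1 * g2) = (t1 * g1) * (t2 * g2)" by (simp add: algebra_simps)
  also have "\<dots> = 1 - (s1 + s2 - s1 * s2 * f) * f" unfolding e1 e2 by (simp add: algebra_simps)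
  finally have "(s1 + s2 - s1 * s2 * f) * f + (t1 * t2) * (g1 * g2) = 1" by simp
  moreover have "s1 + s2 - s1 * s2 * f \<in> Rpoly p" "t1 * t2 \<in> Rpoly p"
    using R f p by (auto intro!: Rpoly_add Rpoly_diff Rpoly_mult)
  ultimately show ?thesis unfolding comaximal_def by blast
qed

lemma comaximal_prod:
  assumes p: "p > 0" and f: "f \<in> Rpoly p" and "\<And>i. i \<in> I \<Longrightarrow> comaximal p f (g i)"
  shows "comaximal p f (prod g I)"
  using assms(3)
  by (induction I rule: infinite_finite_induct) (auto intro: comaximal_one comaximal_mult[OF p f])

lemma comaximal_dvd_cancel:
  assumes p: "p > 0" and "comaximal p f r" "a \<in> Rpoly p" "dvdR p f (r * a)"
  shows "dvdR p f a"
proof -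
  obtain s t h where R: "s \<in> Rpoly p" "t \<in> Rpoly p" "h \<in> Rpoly p"
    and e1: "s * f + t * r = 1" and e2: "r * a = f * h"
    using assms unfolding comaximal_def dvdR_def by blast
  have "a = (s * f + t * r) * a" using e1 by simp
  also have "\<dots> = f * (s * a + t * h)" by (simp add: algebra_simps flip: e2)
  finally show ?thesis unfolding dvdR_def using R assms(3) p by (auto intro!: Rpoly_add Rpoly_mult)
qed

lemma comaximal_mult_dvd:
  assumes p: "p > 0" and "comaximal p F G" "dvdR p F y" "dvdR p G y"
  shows "dvdR p (F * G) y"
proof -
  obtain s t h1 h2 where R: "s \<in> Rpoly p" "t \<in> Rpoly p" "h1 \<in> Rpoly p" "h2 \<in> Rpoly p"
    and e1: "s * F + t * G = 1" and e2: "y = F * h1" and e3: "y = G * h2"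
    using assms unfolding comaximal_def dvdR_def by blast
  have "y = s * F * y + t * G * y" using e1 by (metis distrib_right mult_1)
  also have "\<dots> = (F * G) * (s * h2 + t * h1)"
    by (subst (1) e3, subst e2) (simp add: algebra_simps)
  finally show ?thesis unfolding dvdR_def using R p by (auto intro!: Rpoly_add Rpoly_mult)
qed

lemma pairwise_comaximal_prod_dvd:
  fixes Fs :: "nat \<Rightarrow> complex poly"
  assumes p: "p > 0"
    and comax: "\<And>i j. i \<noteq> j \<Longrightarrow> comaximal p (Fs i) (Fs j)"
    and Fs: "\<And>i. Fs i \<in> Rpoly p" and y: "y \<in> Rpoly p"
  shows "(\<forall>j<J. dvdR p (Fs j) y) \<Longrightarrow> dvdR p (\<Prod>j<J. Fs j) y"
proof (induction J)
  case 0 thus ?case using y by (simp add: dvdR_one)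
next
  case (Suc J)
  have "comaximal p (\<Prod>j<J. Fs j) (Fs J)"
    by (rule comaximal_sym, rule comaximal_prod[OF p Fs]) (auto intro: comax)
  moreover have "dvdR p (\<Prod>j<J. Fs j) y" "dvdR p (Fs J) y" using Suc by auto
  ultimately have "dvdR p ((\<Prod>j<J. Fs j) * Fs J) y" using comaximal_mult_dvd[OF p] by blast
  thus ?case by (simp only: prod.lessThan_Suc)
qed

lemma chinese_remainder:
  fixes Fs :: "nat \<Rightarrow> complex poly"
  assumes p: "p > 0"
    and comax: "\<And>i j. i \<noteq> j \<Longrightarrow> comaximal p (Fs i) (Fs j)"
    and Fs: "\<And>i. Fs i \<in> Rpoly p" and c: "\<And>i. c i \<in> Rpoly p"
  shows "\<exists>x\<in>Rpoly p. \<forall>j<J. dvdR p (Fs j) (x - c j)"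
proof (induction J)
  case 0 show ?case by (rule bexI[of _ 0]) auto
next
  case (Suc J)
  then obtain x0 where x0: "x0 \<in> Rpoly p" "\<forall>j<J. dvdR p (Fs j) (x0 - c j)" by blast
  define P where "P = (\<Prod>i<J. Fs i)"
  have "comaximal p (Fs J) P" unfolding P_def
    by (rule comaximal_prod[OF p Fs]) (auto intro: comax)
  then obtain s t where st: "s \<in> Rpoly p" "t \<in> Rpoly p" "t * Fs J + s * P = 1"
    unfolding comaximal_def by (metis add.commute)
  \<comment> \<open>x agrees with x0 modulo P and with c J modulo Fs J\<close>
  define x where "x = x0 * t * Fs J + c J * s * P"
  have P: "P \<in> Rpoly p" unfolding P_def using Fs p by (intro Rpoly_prod)
  have x: "x \<in> Rpoly p" unfolding x_def using x0 st P Fs c p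
    by (intro Rpoly_add Rpoly_mult) auto
  have "dvdR p (Fs j) (x - c j)" if "j < Suc J" for j
  proof (cases "j = J")
    case True
    have "x - c J - Fs J * (t * (x0 - c J)) = c J * (t * Fs J + s * P - 1)"
      unfolding x_def by (simp add: algebra_simps)
    hence "x - c j = Fs J * (t * (x0 - c J))" using st(3) True by simp
    moreover have "t * (x0 - c J) \<in> Rpoly p" using st x0 c p by (intro Rpoly_mult Rpoly_diff) auto
    ultimately show ?thesis unfolding dvdR_def using True by blast
  next
    case False
    hence j: "j < J" using that by simp
    have "x - c j - ((x0 - c j) + P * (s * (c J - x0))) = x0 * (t * Fs J + s * P - 1)"
      unfolding x_def by (simp add: algebra_simps)
    hence "x - c j - ((x0 - c j) + P * (s * (c J - x0))) = 0" using st(3) by simp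
    hence eq: "x - c j = (x0 - c j) + P * (s * (c J - x0))" by (metis right_minus_eq)
    have "P = Fs j * (\<Prod>i\<in>{..<J} - {j}. Fs i)" unfolding P_def using j
      by (subst prod.remove[of _ j]) auto
    moreover have "(\<Prod>i\<in>{..<J} - {j}. Fs i) * (s * (c J - x0)) \<in> Rpoly p"
      using Fs st c x0 p by (intro Rpoly_mult Rpoly_prod Rpoly_diff) auto
    ultimately have "dvdR p (Fs j) (P * (s * (c J - x0)))"
      using dvdR_mult_right by (metis mult.assoc)
    thus ?thesis unfolding eq using x0(2) j p by (intro dvdR_add) auto
  qed
  thus ?case using x by blast
qed

subsection \<open>Cyclotomic polynomials of different p-adic levels are comaximal\<close>

lemma cyclo_dvd_xN_minus_1:
  assumes "d dvd N"
  shows "cyclo d dvd monom 1 N - 1"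
  by (rule cyclo_dvd_if_roots) (use assms primitive_root_power_1 in \<open>auto simp: poly_monom\<close>)

lemma cis_fraction_ne_1:
  assumes "\<not> p dvd k" "p > 0"
  shows "cis (2 * pi * (real k / real p)) \<noteq> 1"
proof
  assume "cis (2 * pi * (real k / real p)) = 1"
  then obtain M :: int where "2 * pi * (real k / real p) = of_int M * 2 * pi"
    using cis_eq_1_iff_int by blast
  hence "2 * pi * (real k - of_int M * real p) = 0" using assms(2) by (simp add: field_simps)
  hence "of_int (int k) = (of_int (M * int p) :: real)" by simp
  hence "int k = M * int p" by linarith
  hence "int p dvd int k" by simp
  thus False using assms(1) by (simp only: int_dvd_int_iff)
qed

text \<open>
  With y = q^N, N = p^(j-1) b c and c prime to p, the polynomial Phi_(p^j b) divides
  1 + y + ... + y^(p-1): at a primitive (p^j b)-th root z the value y(z) = z^N is a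
  nontrivial p-th root of unity.
\<close>
lemma cyclo_dvd_geometric_sum:
  assumes p: "prime p" and j: "j \<ge> 1" and b: "b > 0" and c: "coprime c p"
  shows "cyclo (p ^ j * b) dvd (\<Sum>l<p. monom 1 (p ^ (j - 1) * b * c) ^ l)"
proof (rule cyclo_dvd_if_roots)
  define N where "N = p ^ (j - 1) * b * c"
  have p0: "p > 0" using p prime_gt_0_nat by blast
  fix z assume "z \<in> primitive_roots (p ^ j * b)"
  then obtain k where k: "coprime k (p ^ j * b)" "z = root_of_unity (p ^ j * b) k"
    unfolding primitive_roots_def by auto
  have "coprime k p" using k(1) j
    by (metis coprime_mult_right_iff coprime_power_right_iff not_one_le_zero)
  hence "\<not> p dvd k * c" using p c by (metis coprime_absorb_right coprime_mult_left_iff not_prime_unit)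
  define w where "w = cis (2 * pi * (real (k * c) / real p))"
  have "real (p ^ j) = real p * real (p ^ (j - 1))" using j
    by (metis Suc_diff_le diff_Suc_1 of_nat_mult power_Suc)
  hence "real k * real N / real (p ^ j * b) = real (k * c) / real p"
    unfolding N_def using p0 b by (simp add: field_simps)
  hence zN: "z ^ N = w" using k(2) root_of_unity_power[of "p ^ j * b" k N] by (simp add: w_def)
  have "w \<noteq> 1" unfolding w_def by (rule cis_fraction_ne_1) fact+
  moreover have "w ^ p = 1"
  proof -
    have "w ^ p = cis (2 * pi * real (k * c))" unfolding w_def using p0 by (simp add: DeMoivre field_simps)
    thus ?thesis by (simp add: cis_multiple_2pi)
  qed
  ultimately have "(\<Sum>l<p. w ^ l) = 0" by (simp add: sum_gp_strict)
  hence "poly (\<Sum>l<p. monom 1 N ^ l) z = 0"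
    by (simp add: poly_sum poly_monom zN flip: power_mult)
  thus "poly (\<Sum>l<p. monom 1 (p ^ (j - 1) * b * c) ^ l) z = 0"
    by (simp only: N_def)
qed

text \<open>
  With y as above (c = a), Phi_(p^i a) divides y - 1, Phi_(p^j b) divides
  Psi = 1 + y + ... + y^(p-1), and Psi - p is a multiple of y - 1; so p, a unit of R,
  lies in the ideal generated by the two cyclotomic polynomials.
\<close>
lemma cyclo_comaximal:
  assumes p: "prime p" and ij: "i < j"
    and a: "coprime a p" and b: "coprime b p" "b \<ge> 1"
  shows "comaximal p (cyclo (p ^ i * a)) (cyclo (p ^ j * b))"
proof -
  have p0: "p > 0" using p prime_gt_0_nat by blast
  define y where "y = (monom 1 (p ^ (j - 1) * b * a) :: complex poly)"
  define Psi where "Psi = (\<Sum>l<p. y ^ l)"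
  define Q where "Q = (\<Sum>l<p. \<Sum>k<l. y ^ k)"
  have y: "y \<in> Rpoly p" unfolding y_def by (rule Rpoly_monom) simp
  have Psi_minus_p: "Psi - of_nat p = (y - 1) * Q"
  proof -
    have "Psi - of_nat p = (\<Sum>l<p. y ^ l - 1)" unfolding Psi_def by (simp add: sum_subtractf)
    also have "\<dots> = (\<Sum>l<p. (y - 1) * (\<Sum>k<l. y ^ k))" by (simp add: power_diff_1_eq)
    also have "\<dots> = (y - 1) * Q" unfolding Q_def by (simp add: sum_distrib_left)
    finally show ?thesis .
  qed
  have "p ^ i * a dvd p ^ (j - 1) * b * a"
    using ij by (simp add: le_imp_power_dvd mult_dvd_mono)
  then obtain v where v: "y - 1 = cyclo (p ^ i * a) * v"
    unfolding y_def using cyclo_dvd_xN_minus_1 by blast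
  have "y - 1 \<in> Rpoly p" using y p0 by (intro Rpoly_diff) auto
  hence "v \<in> Rpoly p" using Rpoly_cyclo_quotient[OF p0 _ v] by blast
  have "cyclo (p ^ j * b) dvd Psi"
    unfolding Psi_def y_def using cyclo_dvd_geometric_sum[OF p _ _ a, of j b] ij b by simp
  then obtain u where u: "Psi = cyclo (p ^ j * b) * u" ..
  have "Psi \<in> Rpoly p" unfolding Psi_def using y p0 by (intro Rpoly_sum Rpoly_power)
  hence "u \<in> Rpoly p" using Rpoly_cyclo_quotient[OF p0 _ u] by blast
  have Q_R: "Q \<in> Rpoly p" unfolding Q_def using y p0 by (intro Rpoly_sum Rpoly_power)
  have p_comb: "of_nat p = u * cyclo (p ^ j * b) - (v * Q) * cyclo (p ^ i * a)"
    using Psi_minus_p u v by (simp add: algebra_simps)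
  define c where "c = 1 / (of_nat p :: complex)"
  have c: "c \<in> Zinvp p" unfolding c_def using Zinvp_inverse[OF p0] .
  have "smult c (of_nat p) = (1 :: complex poly)" using p0 by (simp add: c_def of_nat_poly)
  hence "(- smult c (v * Q)) * cyclo (p ^ i * a) + smult c u * cyclo (p ^ j * b) = 1"
    using p_comb by (simp add: algebra_simps smult_diff_right)
  moreover have "- smult c (v * Q) \<in> Rpoly p"
    using p0 c \<open>v \<in> Rpoly p\<close> Q_R by (metis Rpoly_0 Rpoly_diff Rpoly_mult Rpoly_smult diff_0)
  moreover have "smult c u \<in> Rpoly p" using c \<open>u \<in> Rpoly p\<close> by (rule Rpoly_smult)
  ultimately show ?thesis unfolding comaximal_def by blast
qed

subsection \<open>The p-adic decomposition of products of cyclotomic polynomials\<close>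

lemma pjNp_positive: "prime p \<Longrightarrow> pjNp p j \<subseteq> {n. n \<ge> 1}"
  unfolding pjNp_def by (auto simp: prime_gt_0_nat Suc_le_eq)

lemma pjNp_cover:
  assumes p: "prime p"
  shows "n \<ge> 1 \<Longrightarrow> \<exists>e. n \<in> pjNp p e"
proof (induction n rule: less_induct)
  case (less n)
  show ?case
  proof (cases "p dvd n")
    case True
    then obtain m where m: "n = p * m" by blast
    have "m \<ge> 1" using less.prems m by (cases m) auto
    moreover have "m < n" using m prime_gt_1_nat[OF p] \<open>m \<ge> 1\<close> by simp
    ultimately obtain e where "m \<in> pjNp p e" using less.IH by blast
    then obtain c where "m = p ^ e * c" "c \<ge> 1" "coprime c p" unfolding pjNp_def by blast
    hence "n = p ^ Suc e * c \<and> c \<ge> 1 \<and> coprime c p" using m by simp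
    thus ?thesis unfolding pjNp_def by blast
  next
    case False
    hence "coprime n p" using p by (metis prime_imp_coprime coprime_commute)
    hence "n = p ^ 0 * n \<and> n \<ge> 1 \<and> coprime n p" using less.prems by simp
    thus ?thesis unfolding pjNp_def by blast
  qed
qed

lemma cyclo_pjNp_comaximal:
  assumes p: "prime p" and ij: "i \<noteq> j" and n: "n \<in> pjNp p i" and m: "m \<in> pjNp p j"
  shows "comaximal p (cyclo n) (cyclo m)"
proof -
  obtain a b where a: "n = p ^ i * a" "a \<ge> 1" "coprime a p"
    and b: "m = p ^ j * b" "b \<ge> 1" "coprime b p"
    using n m unfolding pjNp_def by blast
  show ?thesis
  proof (cases "i < j")
    case True thus ?thesis using cyclo_comaximal[OF p True a(3) b(3,2)] a b by simp
  next
    case False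
    hence "j < i" using ij by simp
    thus ?thesis using cyclo_comaximal[OF p _ b(3) a(3,2)] a b by (simp add: comaximal_sym)
  qed
qed

lemma cycloMult_comaximal:
  assumes p: "p > 0" and comax: "\<And>n m. n \<in> A \<Longrightarrow> m \<in> B \<Longrightarrow> comaximal p (cyclo n) (cyclo m)"
    and F: "F \<in> cycloMult A" and G: "G \<in> cycloMult B"
  shows "comaximal p F G"
proof -
  have "comaximal p (cyclo n) G" if "n \<in> A" for n
    using G
  proof (induction rule: cycloMult.induct)
    case one show ?case by (rule comaximal_one)
  next
    case (step m f)
    thus ?case using comax that by (auto intro!: comaximal_mult[OF p] cyclo_Rpoly[OF p])
  qed
  hence G_comax: "comaximal p G (cyclo n)" if "n \<in> A" for n using that comaximal_sym by blast
  have "comaximal p G F" using F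
  proof (induction rule: cycloMult.induct)
    case one show ?case by (rule comaximal_one)
  next
    case (step m f)
    thus ?case using G G_comax by (auto intro!: comaximal_mult[OF p] cycloMult_Rpoly[OF _ p])
  qed
  thus ?thesis by (rule comaximal_sym)
qed

lemma cycloMult_pjNp_comaximal:
  assumes "prime p" "i \<noteq> j" "f \<in> cycloMult (pjNp p i)" "g \<in> cycloMult (pjNp p j)"
  shows "comaximal p f g"
  by (rule cycloMult_comaximal[OF prime_gt_0_nat[OF assms(1)]
        cyclo_pjNp_comaximal[OF assms(1,2)] assms(3,4)])

definition p_decomposition :: "nat \<Rightarrow> complex poly \<Rightarrow> (nat \<Rightarrow> complex poly) \<Rightarrow> nat \<Rightarrow> bool" where
  "p_decomposition p F Fs J \<longleftrightarrow>
     (\<forall>j. Fs j \<in> cycloMult (pjNp p j)) \<and> (\<forall>j\<ge>J. Fs j = 1) \<and> F = (\<Prod>j<J. Fs j)"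

text \<open>Every product of cyclotomic polynomials has a p-adic decomposition: sort the
  factors Phi_n by the exponent of p in n.\<close>
lemma p_decomposition_exists:
  assumes p: "prime p" and F: "F \<in> cycloMult {n. n \<ge> 1}"
  shows "\<exists>Fs J. p_decomposition p F Fs J"
  using F unfolding p_decomposition_def
proof (induction rule: cycloMult.induct)
  case one
  show ?case by (rule exI[of _ "\<lambda>_. 1"], rule exI[of _ 0]) (auto intro: cycloMult.one)
next
  case (step n f)
  then obtain J Fs where H: "\<forall>j. Fs j \<in> cycloMult (pjNp p j)" "\<forall>j\<ge>J. Fs j = 1" "f = (\<Prod>j<J. Fs j)"
    by blast
  obtain e where e: "n \<in> pjNp p e" using pjNp_cover[OF p] step.hyps by auto
  define Fs' where "Fs' j = (if j = e then cyclo n else 1) * Fs j" for j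
  define J' where "J' = max J (Suc e)"
  have "\<forall>j. Fs' j \<in> cycloMult (pjNp p j)"
    unfolding Fs'_def using H(1) e by (auto intro: cycloMult.step)
  moreover have "\<forall>j\<ge>J'. Fs' j = 1" unfolding Fs'_def J'_def using H(2) by auto
  moreover have "cyclo n * f = (\<Prod>j<J'. Fs' j)"
  proof -
    have "(\<Prod>j<J'. Fs' j) = (\<Prod>j<J'. (if j = e then cyclo n else 1)) * (\<Prod>j<J'. Fs j)"
      unfolding Fs'_def by (rule prod.distrib)
    also have "(\<Prod>j<J'. (if j = e then cyclo n else 1)) = cyclo n"
      unfolding J'_def by (subst prod.delta) auto
    also have "(\<Prod>j<J'. Fs j) = (\<Prod>j<J. Fs j)"
      unfolding J'_def by (rule prod.mono_neutral_right) (use H(2) in auto)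
    finally show ?thesis using H(3) by simp
  qed
  ultimately show ?case by blast
qed

lemma p_decomposition_split:
  assumes "p_decomposition p F Fs J"
  shows "F = Fs j * (\<Prod>i\<in>{..<J} - {j}. Fs i)"
proof (cases "j < J")
  case True thus ?thesis using assms prod.remove[of "{..<J}" j Fs] by (simp add: p_decomposition_def)
next
  case False thus ?thesis using assms by (simp add: p_decomposition_def)
qed

lemma p_decomposition_Rpoly:
  assumes "prime p" "p_decomposition p F Fs J"
  shows "Fs j \<in> Rpoly p"
proof -
  have "Fs j \<in> cycloMult (pjNp p j)" using assms(2) unfolding p_decomposition_def by blast
  thus ?thesis using cycloMult_Rpoly prime_gt_0_nat[OF assms(1)] by blast
qed

lemma p_decomposition_comaximal:
  assumes "prime p" "p_decomposition p F Fs J" "i \<noteq> j"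
  shows "comaximal p (Fs i) (Fs j)"
  using assms cycloMult_pjNp_comaximal unfolding p_decomposition_def by blast

lemma p_decomposition_factor_dvd:
  assumes p: "prime p" and dec: "p_decomposition p F Fs J"
  shows "dvdR p (Fs j) F"
proof -
  have "(\<Prod>i\<in>{..<J} - {j}. Fs i) \<in> Rpoly p"
    using p_decomposition_Rpoly[OF p dec] by (intro Rpoly_prod prime_gt_0_nat[OF p])
  thus ?thesis using p_decomposition_split[OF dec] unfolding dvdR_def by blast
qed

text \<open>A divisor of F built from level-j cyclotomic polynomials divides the j-th factor,
  being comaximal with all the other factors.\<close>
lemma p_decomposition_dvd_factor:
  assumes p: "prime p" and dec: "p_decomposition p F Fs J"
    and f: "f \<in> cycloMult (pjNp p j)" "dvdR p f F"
  shows "dvdR p f (Fs j)"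
proof -
  have p0: "p > 0" using p prime_gt_0_nat by blast
  define r where "r = (\<Prod>i\<in>{..<J} - {j}. Fs i)"
  have "comaximal p f r" unfolding r_def
  proof (rule comaximal_prod[OF p0 cycloMult_Rpoly[OF f(1) p0]])
    fix i assume "i \<in> {..<J} - {j}"
    hence "j \<noteq> i" by auto
    moreover have "Fs i \<in> cycloMult (pjNp p i)" using dec unfolding p_decomposition_def by blast
    ultimately show "comaximal p f (Fs i)" by (rule cycloMult_pjNp_comaximal[OF p _ f(1)])
  qed
  moreover have "F = r * Fs j" using p_decomposition_split[OF dec] by (simp add: r_def mult.commute)
  ultimately show ?thesis
    using comaximal_dvd_cancel[OF p0 _ p_decomposition_Rpoly[OF p dec]] f(2) by simp
qed

lemma p_decomposition_dvd_iff:
  assumes p: "prime p" and dec: "p_decomposition p F Fs J" and y: "y \<in> Rpoly p"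
  shows "dvdR p F y \<longleftrightarrow> (\<forall>j<J. dvdR p (Fs j) y)"
proof -
  have p0: "p > 0" using p prime_gt_0_nat by blast
  have "dvdR p (Fs j) y" if "dvdR p F y" for j
    using dvdR_trans[OF p0 p_decomposition_factor_dvd[OF p dec] that] .
  moreover have "dvdR p F y" if "\<forall>j<J. dvdR p (Fs j) y"
  proof -
    have "dvdR p (\<Prod>j<J. Fs j) y"
      using pairwise_comaximal_prod_dvd[OF p0 p_decomposition_comaximal[OF p dec]
          p_decomposition_Rpoly[OF p dec] y that] .
    thus ?thesis using dec unfolding p_decomposition_def by simp
  qed
  ultimately show ?thesis by blast
qed

subsection \<open>The natural map R[q]^N \<rightarrow> prod_j R[q]^(p^j N_p) is bijective\<close>

text \<open>Injectivity: if g and h agree in every R[q]^(p^j N_p), they agree modulo every F,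
  since they agree modulo each factor F_j of a p-adic decomposition of F.\<close>
lemma limit_map_injective:
  assumes p: "prime p"
    and g: "compat p {n. n \<ge> 1} g" and h: "compat p {n. n \<ge> 1} h"
    and agree: "\<forall>j. eqlim p (pjNp p j) g h"
  shows "eqlim p {n. n \<ge> 1} g h"
  unfolding eqlim_def
proof
  have p0: "p > 0" using p prime_gt_0_nat by blast
  fix F assume F: "F \<in> cycloMult {n. n \<ge> 1}"
  obtain Fs J where dec: "p_decomposition p F Fs J"
    using p_decomposition_exists[OF p F] by blast
  have "dvdR p (Fs j) (g F - h F)" for j
  proof -
    have Fs: "Fs j \<in> cycloMult (pjNp p j)" using dec unfolding p_decomposition_def by blast
    hence Fs_N: "Fs j \<in> cycloMult {n. n \<ge> 1}" using cycloMult_mono pjNp_positive[OF p] by blast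
    have "dvdR p (Fs j) F" by (rule p_decomposition_factor_dvd[OF p dec])
    hence g_F: "dvdR p (Fs j) (g F - g (Fs j))" and h_F: "dvdR p (Fs j) (h F - h (Fs j))"
      using g h Fs_N F unfolding compat_def by blast+
    have gh: "dvdR p (Fs j) (g (Fs j) - h (Fs j))" using agree Fs unfolding eqlim_def by blast
    have "dvdR p (Fs j) (((g F - g (Fs j)) - (h F - h (Fs j))) + (g (Fs j) - h (Fs j)))"
      by (rule dvdR_add[OF p0 dvdR_diff[OF p0 g_F h_F] gh])
    thus ?thesis by simp
  qed
  moreover have "g F - h F \<in> Rpoly p"
    using g h F p0 unfolding compat_def by (blast intro: Rpoly_diff)
  ultimately show "dvdR p F (g F - h F)" using p_decomposition_dvd_iff[OF p dec] by blast
qed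

text \<open>x \<in> R[q] lifts the family G modulo F: x is congruent to G_j(f) modulo every
  level-j divisor f of F.  This is a point of R[q]/(F) over the given family.\<close>
definition lifts :: "nat \<Rightarrow> (nat \<Rightarrow> complex poly \<Rightarrow> complex poly) \<Rightarrow> complex poly \<Rightarrow> complex poly \<Rightarrow> bool" where
  "lifts p G F x \<longleftrightarrow> x \<in> Rpoly p \<and>
     (\<forall>j. \<forall>f\<in>cycloMult (pjNp p j). dvdR p f F \<longrightarrow> dvdR p f (x - G j f))"

text \<open>Lifts exist, by the Chinese remainder theorem applied to a p-adic decomposition
  of F with the residues G_j(F_j).\<close>
lemma lifts_exist:
  assumes p: "prime p" and G: "\<forall>j. compat p (pjNp p j) (G j)"
    and F: "F \<in> cycloMult {n. n \<ge> 1}"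
  shows "\<exists>x. lifts p G F x"
proof -
  have p0: "p > 0" using p prime_gt_0_nat by blast
  obtain Fs J where dec: "p_decomposition p F Fs J"
    using p_decomposition_exists[OF p F] by blast
  have Fs: "Fs j \<in> cycloMult (pjNp p j)" for j using dec unfolding p_decomposition_def by blast
  have residue: "G j (Fs j) \<in> Rpoly p" for j using G Fs unfolding compat_def by blast
  have "\<exists>x\<in>Rpoly p. \<forall>j<J. dvdR p (Fs j) (x - G j (Fs j))"
    by (rule chinese_remainder[OF p0 p_decomposition_comaximal[OF p dec]
        p_decomposition_Rpoly[OF p dec] residue])
  then obtain x where x: "x \<in> Rpoly p" "\<forall>j<J. dvdR p (Fs j) (x - G j (Fs j))" ..
  have x_all: "dvdR p (Fs j) (x - G j (Fs j))" for j
  proof (cases "j < J")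
    case True thus ?thesis using x by blast
  next
    case False
    hence "Fs j = 1" using dec unfolding p_decomposition_def by simp
    thus ?thesis using x(1) residue[of j] p0 by (simp add: dvdR_one Rpoly_diff)
  qed
  have "dvdR p f (x - G j f)" if f: "f \<in> cycloMult (pjNp p j)" "dvdR p f F" for j f
  proof -
    have f_Fs: "dvdR p f (Fs j)" using p_decomposition_dvd_factor[OF p dec f] .
    have "f \<in> cycloMult (pjNp p j) \<longrightarrow> Fs j \<in> cycloMult (pjNp p j) \<longrightarrow>
        dvdR p f (Fs j) \<longrightarrow> dvdR p f (G j (Fs j) - G j f)"
      using G unfolding compat_def by blast
    hence "dvdR p f (G j (Fs j) - G j f)" using f(1) Fs f_Fs by blast
    with dvdR_trans[OF p0 f_Fs x_all]
    have "dvdR p f ((x - G j (Fs j)) + (G j (Fs j) - G j f))" by (rule dvdR_add[OF p0])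
    thus ?thesis by simp
  qed
  thus ?thesis using x(1) unfolding lifts_def by blast
qed

lemma lifts_compatible:
  assumes p: "prime p" and F: "F \<in> cycloMult {n. n \<ge> 1}" and FF': "dvdR p F F'"
    and x: "lifts p G F x" and x': "lifts p G F' x'"
  shows "dvdR p F (x' - x)"
proof -
  have p0: "p > 0" using p prime_gt_0_nat by blast
  obtain Fs J where dec: "p_decomposition p F Fs J"
    using p_decomposition_exists[OF p F] by blast
  have "dvdR p (Fs j) (x' - x)" for j
  proof -
    have Fs: "Fs j \<in> cycloMult (pjNp p j)" using dec unfolding p_decomposition_def by blast
    have "dvdR p (Fs j) F" by (rule p_decomposition_factor_dvd[OF p dec])
    moreover have "dvdR p (Fs j) F'" using dvdR_trans[OF p0 calculation FF'] .
    ultimately have "dvdR p (Fs j) (x - G j (Fs j))" "dvdR p (Fs j) (x' - G j (Fs j))"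
      using x x' Fs unfolding lifts_def by blast+
    hence "dvdR p (Fs j) ((x' - G j (Fs j)) - (x - G j (Fs j)))" using dvdR_diff[OF p0] by blast
    thus ?thesis by simp
  qed
  moreover have "x' - x \<in> Rpoly p" using x x' p0 unfolding lifts_def by (blast intro: Rpoly_diff)
  ultimately show ?thesis using p_decomposition_dvd_iff[OF p dec] by blast
qed

text \<open>Surjectivity: choosing a lift modulo every F gives an element of R[q]^N mapping
  to the given family.\<close>
lemma limit_map_surjective:
  assumes p: "prime p" and G: "\<forall>j. compat p (pjNp p j) (G j)"
  shows "\<exists>g. compat p {n. n \<ge> 1} g \<and> (\<forall>j. eqlim p (pjNp p j) g (G j))"
proof -
  define g where "g F = (SOME x. lifts p G F x)" for F
  have g_lifts: "lifts p G F (g F)" if "F \<in> cycloMult {n. n \<ge> 1}" for F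
    unfolding g_def using lifts_exist[OF p G that] by (rule someI_ex)
  have "compat p {n. n \<ge> 1} g"
    unfolding compat_def using g_lifts lifts_compatible[OF p _ _ g_lifts g_lifts]
    by (auto simp: lifts_def)
  moreover have "eqlim p (pjNp p j) g (G j)" for j
    unfolding eqlim_def
  proof
    fix f assume f: "f \<in> cycloMult (pjNp p j)"
    hence "f \<in> cycloMult {n. n \<ge> 1}" using cycloMult_mono pjNp_positive[OF p] by blast
    thus "dvdR p f (g f - G j f)" using g_lifts f dvdR_refl unfolding lifts_def by blast
  qed
  ultimately show ?thesis by blast
qed

theorem proposition8:
  fixes p :: nat
  assumes "prime p"
  shows "(\<forall>g h. compat p {n. n \<ge> 1} g \<longrightarrow> compat p {n. n \<ge> 1} h \<longrightarrow>
            (\<forall>j. eqlim p (pjNp p j) g h) \<longrightarrow> eqlim p {n. n \<ge> 1} g h)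
       \<and> (\<forall>G :: nat \<Rightarrow> complex poly \<Rightarrow> complex poly.
            (\<forall>j. compat p (pjNp p j) (G j)) \<longrightarrow>
            (\<exists>g. compat p {n. n \<ge> 1} g \<and> (\<forall>j. eqlim p (pjNp p j) g (G j))))"
  using limit_map_injective[OF assms] limit_map_surjective[OF assms] by blast
end
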